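(* Let $q$ be odd with $q\equiv1\pmod4$ fixed. Then, as $g\to\infty$, $$\sum_{\substack{P\text{ monic irreducible}\\ \deg P=2g+1}}\ \sum_{\substack{f\text{ monic},\ \deg f\le 2g\\ f=\square}}\frac{\chi_P(f)\,d(f)}{|f|^{1/2}}=\frac{1}{12}\,\frac{1}{\zeta_A(2)}\,\frac{|P|}{\log_q|P|}\,g(g+1)(2g+1)+O\!\left(\frac{|P|}{\log_q|P|}\,g^2\right),$$ where $|P|=q^{2g+1}$, $\log_q|P|=2g+1$, $\zeta_A(2)=\frac{1}{1-q^{-1}}$.
   Context: $A=\mathbb{F}_q[T]$; for nonzero $f\in A$, $|f|=q^{\deg f}$. "$f=\square$" means $f$ is the square of a monic polynomial. $d(f)$ is the number of pairs $(h_1,h_2)$ of monic polynomials with $h_1h_2=f$. For a monic irreducible $Q$ and $a\in A$, $\left(\frac{a}{Q}\right)$ is $0$ if $Q\mid a$, $1$ if $a$ is a nonzero square mod $Q$, $-1$ otherwise; extended to monic $f=\prod Q_i^{e_i}$ by $\left(\frac{a}{f}\right)=\prod\left(\frac{a}{Q_i}\right)^{e_i}$, $\left(\frac{a}{1}\right)=1$. For monic irreducible $P$, $\chi_P(f)=\left(\frac{P}{f}\right)$. Implied constants may depend on $q$. *)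

theory Defs
  imports "HOL-Computational_Algebra.Computational_Algebra" "HOL-Library.Landau_Symbols"
begin

text \<open>Polynomials over a finite field 'a play the role of A = F_q[T].\<close>

definition monic :: "'a::field_gcd poly \<Rightarrow> bool" where
  "monic p \<longleftrightarrow> lead_coeff p = 1"

definition leg_sym :: "'a::field_gcd poly \<Rightarrow> 'a poly \<Rightarrow> int" where
  "leg_sym a Q = (if Q dvd a then 0
                  else if (\<exists>b. Q dvd (b ^ 2 - a)) then 1 else -1)"

definition jac_sym :: "'a::field_gcd poly \<Rightarrow> 'a poly \<Rightarrow> int" where
  "jac_sym a f = (\<Prod>Q\<in>prime_factors f. leg_sym a Q ^ multiplicity Q f)"

definition chi :: "'a::field_gcd poly \<Rightarrow> 'a poly \<Rightarrow> int" where
  "chi P f = jac_sym P f"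

definition divisor_count :: "'a::field_gcd poly \<Rightarrow> nat" where
  "divisor_count f = card {(h1, h2). monic h1 \<and> monic h2 \<and> h1 * h2 = f}"

definition is_monic_square :: "'a::field_gcd poly \<Rightarrow> bool" where
  "is_monic_square f \<longleftrightarrow> (\<exists>h. monic h \<and> f = h ^ 2)"

definition pnorm :: "'a::{finite,field_gcd} poly \<Rightarrow> real" where
  "pnorm (f::'a poly) = real (card (UNIV :: 'a set)) ^ degree f"

end

theory Submission
  imports Defs
begin

(*
  For f = h^2 with h monic of degree at most g < deg P, every prime factor of f has even
  multiplicity and is coprime to P, so chi_P(f) = 1. Hence the double sum factorises as
  \<pi>(2g+1) S(g), where \<pi>(N) counts monic irreducibles of degree N and
  S(g) = \<Sum>_{deg h \<le> g} d(h^2) / |h|.  Two independent estimates then finish the proof: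
  (1) Divisor sum.  Pairs (h, a) with a a monic divisor of h^2 correspond to coprime triples
      (g, u, v) via h = g u v, a = g u^2; splitting off gcds of arbitrary monic triples gives
      #coprime_triples n = #monic_triples n - q #monic_triples (n - 2), and
      #monic_triples n = (n+1)(n+2) q^n / 2.  So S(g) = \<Sum>_{n \<le> g} T(n) with T explicit,
      and S(g) equals the main term M(g) = g(g+1)(2g+1)(1 - 1/q)/12 up to O(g^2).
  (2) Prime polynomial theorem.  Counting degrees of prime power divisors of all monic
      polynomials yields Gauss's formula \<Sum>_{d | N} d \<pi>(d) = q^N, hence
      0 \<le> q^N/N - \<pi>(N) \<le> (N/2 + 1) q^(N/2).
  Combining the two, \<pi>(N) S(g) - (q^N/N) M(g) = O(q^N g^2 / N).
*)

subsection \<open>Monic polynomials\<close>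

lemma unit_factor_field_gcd: "unit_factor (x::'a::field_gcd) = x"
  by (cases "x = 0") (auto intro!: is_unit_unit_factor simp: dvd_field_iff)

text \<open>Over a field, the monic polynomials are exactly the nonzero normalised ones; this links
  the definition of monic with the normalisation used by the factorisation library.\<close>
lemma monic_iff_normalize:
  fixes p :: "'a::field_gcd poly"
  assumes "p \<noteq> 0"
  shows "monic p \<longleftrightarrow> normalize p = p"
proof -
  have uf: "unit_factor p = [:lead_coeff p:]"
    by (simp add: unit_factor_poly_def unit_factor_field_gcd)
  show ?thesis
  proof
    assume "monic p"
    thus "normalize p = p"
      using uf normalize_mult_unit_factor[of p] by (simp add: monic_def)
  next
    assume "normalize p = p"
    hence "unit_factor p = 1" using assms unit_factor_normalize[of p] by simp
    thus "monic p" using uf by (simp add: monic_def one_pCons)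
  qed
qed

lemma monic_nonzero: "monic p \<Longrightarrow> p \<noteq> 0"
  by (auto simp: monic_def)

lemma normalize_monic: "monic (p::'a::field_gcd poly) \<Longrightarrow> normalize p = p"
  using monic_iff_normalize monic_nonzero by blast

lemma monic_mult: "monic p \<Longrightarrow> monic q \<Longrightarrow> monic (p * q)"
  by (simp add: monic_def lead_coeff_mult)

lemma monic_power: "monic p \<Longrightarrow> monic (p ^ n)"
  by (simp add: monic_def lead_coeff_power)

lemma monic_cofactor: "monic (p * q) \<Longrightarrow> monic p \<Longrightarrow> monic (q::'a::field_gcd poly)"
  by (simp add: monic_def lead_coeff_mult)

lemma monic_gcd: "(p::'a::field_gcd poly) \<noteq> 0 \<Longrightarrow> monic (gcd p q)"
  by (metis gcd_eq_0_iff monic_iff_normalize normalize_gcd)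

lemma prime_factor_monic: "(P::'a::field_gcd poly) \<in> prime_factors p \<Longrightarrow> monic P"
  by (metis in_prime_factors_imp_prime monic_iff_normalize prime_def not_prime_0)

lemma monic_irreducible_imp_prime:
  "monic (P::'a::field_gcd poly) \<Longrightarrow> irreducible P \<Longrightarrow> prime P"
  by (simp add: prime_def irreducible_imp_prime_elem normalize_monic)

lemma irreducible_degree_pos: "irreducible (p::'a::field_gcd poly) \<Longrightarrow> degree p > 0"
  by (metis irreducible_def is_unit_iff_degree neq0_conv)

text \<open>A monic polynomial is determined by its square (h = -k forces 1 = -1 by comparing
  leading coefficients, and then -k = k).\<close>
lemma monic_square_inj:
  fixes h k :: "'a::field_gcd poly"
  assumes "monic h" "monic k" "h ^ 2 = k ^ 2"
  shows "h = k"
proof -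
  have "h = k \<or> h = - k" using assms(3) by (simp add: power2_eq_iff)
  moreover have "h = k" if hk: "h = - k"
  proof -
    have "(1::'a) = - 1" using hk assms(1,2) by (simp add: monic_def)
    hence "- k = smult 1 k" by (metis minus_one_mult_self mult_minus1 smult_1_left smult_minus_left)
    thus "h = k" using hk by simp
  qed
  ultimately show ?thesis by blast
qed

lemma gcd_coprime_decomposition:
  fixes a b :: "'a::field_gcd poly"
  assumes "a \<noteq> 0"
  obtains u v where "a = gcd a b * u" "b = gcd a b * v" "coprime u v"
  using assms by (metis div_gcd_coprime dvd_mult_div_cancel gcd_dvd1 gcd_dvd2 gcd_eq_0_iff)

lemma gcd_mult_coprime:
  fixes c u v :: "'a::field_gcd poly"
  assumes "monic c" "coprime u v"
  shows "gcd (c * u) (c * v) = c"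
  using assms by (simp add: gcd_mult_left normalize_monic)

subsection \<open>Counting monic polynomials\<close>

lemma finite_degree_le: "finite {p::'a::{finite,zero} poly. degree p \<le> n}"
proof (rule finite_subset)
  show "{p::'a poly. degree p \<le> n} \<subseteq> Poly ` {xs. set xs \<subseteq> UNIV \<and> length xs = Suc n}"
  proof
    fix p :: "'a poly" assume "p \<in> {p. degree p \<le> n}"
    hence "p = Poly (map (coeff p) [0..<Suc n])"
      by (intro poly_eqI) (auto simp: nth_default_def coeff_eq_0 simp del: upt_Suc)
    thus "p \<in> Poly ` {xs. set xs \<subseteq> UNIV \<and> length xs = Suc n}" by (intro image_eqI) auto
  qed
qed (intro finite_imageI finite_lists_length_eq; simp)

definition monics :: "nat \<Rightarrow> 'a::field_gcd poly set" where
  "monics n = {p. monic p \<and> degree p = n}"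

lemma finite_monics: "finite (monics n :: 'a::{finite,field_gcd} poly set)"
  by (rule finite_subset[OF _ finite_degree_le[of n]]) (auto simp: monics_def)

lemma monics_0: "monics 0 = {1}"
  by (auto simp: monics_def monic_def elim: degree_eq_zeroE)

lemma monics_Suc: "monics (Suc n) = (\<lambda>(a, r). pCons a r) ` (UNIV \<times> monics n)"
proof (intro equalityI subsetI)
  fix p assume "p \<in> monics (Suc n)"
  hence p: "monic p" "degree p = Suc n" by (auto simp: monics_def)
  obtain a r where pr: "p = pCons a r" by (cases p) auto
  have "r \<noteq> 0" using p pr by auto
  hence "monic r" "degree r = n" using p pr by (auto simp: monic_def)
  thus "p \<in> (\<lambda>(a, r). pCons a r) ` (UNIV \<times> monics n)" using pr by (auto simp: monics_def)
next
  fix p assume "p \<in> (\<lambda>(a, r). pCons a r) ` (UNIV \<times> monics n)"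
  then obtain a r where "p = pCons a r" "monic r" "degree r = n" by (auto simp: monics_def)
  thus "p \<in> monics (Suc n)" using monic_nonzero[of r] by (auto simp: monics_def monic_def)
qed

lemma card_monics: "card (monics n :: 'a::{finite,field_gcd} poly set) = card (UNIV::'a set) ^ n"
proof (induction n)
  case 0 show ?case by (simp add: monics_0)
next
  case (Suc n)
  have "card (monics (Suc n) :: 'a poly set) = card ((UNIV::'a set) \<times> (monics n :: 'a poly set))"
    unfolding monics_Suc by (rule card_image) (auto simp: inj_on_def)
  thus ?case using Suc by (simp add: card_cartesian_product)
qed

lemma card_ge_2: "card (UNIV::'a::{finite,field_gcd} set) \<ge> 2"
proof -
  have "card {0::'a, 1} \<le> card (UNIV::'a set)" by (rule card_mono) auto
  thus ?thesis by simp
qed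

lemma monic_multiples:
  assumes h: "monic (h::'a::field_gcd poly)" "degree h \<le> n"
  shows "{f \<in> monics n. h dvd f} = (\<lambda>m. h * m) ` monics (n - degree h)"
proof (intro equalityI subsetI)
  fix f assume "f \<in> {f \<in> monics n. h dvd f}"
  then obtain m where f: "monic f" "degree f = n" "f = h * m" by (auto simp: monics_def)
  have "monic m" using f h monic_cofactor by auto
  moreover have "degree f = degree h + degree m"
    using f(3) monic_nonzero[OF h(1)] monic_nonzero[OF \<open>monic m\<close>] by (simp add: degree_mult_eq)
  ultimately show "f \<in> (\<lambda>m. h * m) ` monics (n - degree h)" using f by (auto simp: monics_def)
next
  fix f assume "f \<in> (\<lambda>m. h * m) ` monics (n - degree h)"
  then obtain m where m: "monic m" "degree m = n - degree h" "f = h * m" by (auto simp: monics_def)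
  thus "f \<in> {f \<in> monics n. h dvd f}"
    using h monic_nonzero[of h] monic_nonzero[of m] monic_mult by (auto simp: monics_def degree_mult_eq)
qed

lemma card_monic_multiples:
  assumes h: "monic (h::'a::{finite,field_gcd} poly)" "degree h \<le> n"
  shows "card {f \<in> monics n. h dvd f} = card (UNIV::'a set) ^ (n - degree h)"
proof -
  have "inj_on (\<lambda>m. h * m) (monics (n - degree h))" using monic_nonzero[OF h(1)]
    by (auto simp: inj_on_def)
  thus ?thesis by (simp add: monic_multiples[OF h] card_image card_monics)
qed

lemma card_monics_degree_le:
  "card {p::'a::{finite,field_gcd} poly. monic p \<and> degree p \<le> m} \<le> (m + 1) * card (UNIV::'a set) ^ m"
proof -
  have "{p::'a poly. monic p \<and> degree p \<le> m} = (\<Union>d\<in>{..m}. monics d)" by (auto simp: monics_def)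
  hence "card {p::'a poly. monic p \<and> degree p \<le> m} \<le> (\<Sum>d\<le>m. card (monics d :: 'a poly set))"
    by (simp add: card_UN_le)
  also have "\<dots> \<le> (\<Sum>d\<le>m. card (UNIV::'a set) ^ m)"
    unfolding card_monics using card_ge_2[where 'a='a] by (intro sum_mono power_increasing) auto
  finally show ?thesis by simp
qed

lemma card_graded_by_degree:
  fixes Y :: "nat \<Rightarrow> 'b set"
  assumes "\<And>i. finite (Y i)"
  shows "card {(x::'a::{finite,field_gcd} poly, y). monic x \<and> degree x \<le> m \<and> y \<in> Y (degree x)} =
         (\<Sum>i\<le>m. card (UNIV::'a set) ^ i * card (Y i))"
proof -
  have "{(x::'a poly, y). monic x \<and> degree x \<le> m \<and> y \<in> Y (degree x)} = (\<Union>i\<in>{..m}. monics i \<times> Y i)"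
    by (auto simp: monics_def)
  moreover have "card (\<Union>i\<in>{..m}. (monics i :: 'a poly set) \<times> Y i) =
      (\<Sum>i\<le>m. card ((monics i :: 'a poly set) \<times> Y i))"
    using assms finite_monics by (intro card_UN_disjoint) (auto simp: monics_def)
  ultimately show ?thesis by (simp add: card_cartesian_product card_monics)
qed

subsection \<open>Gauss's formula and the prime polynomial theorem\<close>

definition prime_powers_upto :: "nat \<Rightarrow> ('a::field_gcd poly \<times> nat) set" where
  "prime_powers_upto n = {(P, i). monic P \<and> irreducible P \<and> 1 \<le> i \<and> i * degree P \<le> n}"

definition prime_powers_of_degree :: "nat \<Rightarrow> ('a::field_gcd poly \<times> nat) set" where
  "prime_powers_of_degree n = {(P, i). monic P \<and> irreducible P \<and> 1 \<le> i \<and> i * degree P = n}"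

lemma finite_prime_powers_upto:
  "finite (prime_powers_upto n :: ('a::{finite,field_gcd} poly \<times> nat) set)"
proof (rule finite_subset)
  show "prime_powers_upto n \<subseteq> {P::'a poly. degree P \<le> n} \<times> {..n}"
  proof safe
    fix P :: "'a poly" and i assume "(P, i) \<in> prime_powers_upto n"
    hence "degree P \<ge> 1" "1 \<le> i" "i * degree P \<le> n"
      using irreducible_degree_pos by (auto simp: prime_powers_upto_def Suc_le_eq)
    moreover have "degree P \<le> i * degree P" "i \<le> i * degree P"
      using calculation(1,2) by simp_all
    ultimately show "degree P \<le> n" "i \<le> n" by linarith+
  qed
qed (use finite_degree_le in auto)

lemma finite_prime_powers_of_degree:
  "finite (prime_powers_of_degree n :: ('a::{finite,field_gcd} poly \<times> nat) set)"
  by (rule finite_subset[OF _ finite_prime_powers_upto[of n]])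
     (auto simp: prime_powers_upto_def prime_powers_of_degree_def)

lemma prime_power_divisors:
  assumes f: "monic (f::'a::{finite,field_gcd} poly)"
  shows "{x \<in> prime_powers_upto (degree f). fst x ^ snd x dvd f} =
         Sigma (prime_factors f) (\<lambda>P. {1..multiplicity P f})"
proof (intro equalityI subsetI)
  have f0: "f \<noteq> 0" using f monic_nonzero by auto
  {
    fix x assume "x \<in> {x \<in> prime_powers_upto (degree f). fst x ^ snd x dvd f}"
    then obtain P i where x: "x = (P, i)" "monic P" "irreducible P" "1 \<le> i" "P ^ i dvd f"
      by (auto simp: prime_powers_upto_def)
    have pr: "prime P" using x(2,3) by (rule monic_irreducible_imp_prime)
    have "P dvd P ^ i" using x(4) by (simp add: dvd_power)
    hence "P dvd f" using x(5) by (rule dvd_trans)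
    hence "P \<in> prime_factors f" using pr f0 by (simp add: in_prime_factors_iff)
    moreover have "i \<le> multiplicity P f" using f0 x(5) pr by (intro multiplicity_geI) auto
    ultimately show "x \<in> Sigma (prime_factors f) (\<lambda>P. {1..multiplicity P f})" using x by auto
  next
    fix x assume x: "x \<in> Sigma (prime_factors f) (\<lambda>P. {1..multiplicity P f})"
    then obtain P i where x: "x = (P, i)" "P \<in> prime_factors f" "1 \<le> i" "i \<le> multiplicity P f"
      by auto
    have pr: "prime P" using x(2) by (auto dest: in_prime_factors_imp_prime)
    have dv: "P ^ i dvd f" using x(4) by (rule multiplicity_dvd')
    have "degree (P ^ i) \<le> degree f" using dv f0 by (rule dvd_imp_degree_le)
    hence "i * degree P \<le> degree f" using pr by (simp add: degree_power_eq)
    moreover have "monic P" using x(2) by (rule prime_factor_monic)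
    moreover have "irreducible P" using pr by (simp add: prime_elem_imp_irreducible)
    ultimately show "x \<in> {x \<in> prime_powers_upto (degree f). fst x ^ snd x dvd f}"
      using x dv by (auto simp: prime_powers_upto_def)
  }
qed

lemma degree_eq_sum_prime_power_divisors:
  assumes f: "monic (f::'a::{finite,field_gcd} poly)"
  shows "degree f = (\<Sum>x\<in>prime_powers_upto (degree f). if fst x ^ snd x dvd f then degree (fst x) else 0)"
proof -
  have f0: "f \<noteq> 0" using f monic_nonzero by auto
  have "degree f = degree (\<Prod>P\<in>prime_factors f. P ^ multiplicity P f)"
    using prod_prime_factors[OF f0] normalize_monic[OF f] by simp
  also have "\<dots> = (\<Sum>P\<in>prime_factors f. degree (P ^ multiplicity P f))"
    by (rule degree_prod_sum_eq) (auto dest: in_prime_factors_imp_prime)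
  also have "\<dots> = (\<Sum>P\<in>prime_factors f. \<Sum>i\<in>{1..multiplicity P f}. degree P)"
  proof (intro sum.cong refl)
    fix P assume "P \<in> prime_factors f"
    hence "P \<noteq> 0" by (auto dest: in_prime_factors_imp_prime)
    thus "degree (P ^ multiplicity P f) = (\<Sum>i\<in>{1..multiplicity P f}. degree P)"
      by (simp add: degree_power_eq)
  qed
  also have "\<dots> = (\<Sum>x\<in>Sigma (prime_factors f) (\<lambda>P. {1..multiplicity P f}). degree (fst x))"
    by (subst sum.Sigma) (auto simp: split_def)
  also have "\<dots> = (\<Sum>x\<in>prime_powers_upto (degree f). if fst x ^ snd x dvd f then degree (fst x) else 0)"
    unfolding prime_power_divisors[OF f, symmetric]
    by (rule sum.inter_filter[OF finite_prime_powers_upto])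
  finally show ?thesis .
qed

text \<open>Summing the previous identity over all monic f of degree n and exchanging the sums:
  each prime power P^i of degree at most n divides q^(n - i deg P) of them.\<close>
lemma sum_degree_monics:
  "n * card (UNIV::'a::{finite,field_gcd} set) ^ n =
   (\<Sum>x\<in>(prime_powers_upto n :: ('a poly \<times> nat) set).
      degree (fst x) * card (UNIV::'a set) ^ (n - snd x * degree (fst x)))"
proof -
  have "n * card (UNIV::'a set) ^ n = (\<Sum>f\<in>(monics n :: 'a poly set). degree f)"
    by (simp add: monics_def card_monics[unfolded monics_def])
  also have "\<dots> = (\<Sum>f\<in>(monics n :: 'a poly set). \<Sum>x\<in>prime_powers_upto n.
                     if fst x ^ snd x dvd f then degree (fst x) else 0)"
    by (intro sum.cong refl) (auto simp: monics_def intro: degree_eq_sum_prime_power_divisors)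
  also have "\<dots> = (\<Sum>x\<in>prime_powers_upto n. \<Sum>f\<in>(monics n :: 'a poly set).
                     if fst x ^ snd x dvd f then degree (fst x) else 0)"
    by (rule sum.swap)
  also have "\<dots> = (\<Sum>x\<in>(prime_powers_upto n :: ('a poly \<times> nat) set).
                     degree (fst x) * card (UNIV::'a set) ^ (n - snd x * degree (fst x)))"
  proof (intro sum.cong refl)
    fix x :: "'a poly \<times> nat" assume "x \<in> prime_powers_upto n"
    then obtain P i where x: "x = (P, i)" "monic P" "i * degree P \<le> n"
      by (auto simp: prime_powers_upto_def)
    have "P \<noteq> 0" using x(2) by (rule monic_nonzero)
    hence "monic (P ^ i)" "degree (P ^ i) = i * degree P"
      using x(2) monic_power by (auto simp: degree_power_eq)
    hence "card {f \<in> monics n. P ^ i dvd f} = card (UNIV::'a set) ^ (n - i * degree P)"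
      using card_monic_multiples[of "P ^ i" n] x(3) by simp
    thus "(\<Sum>f\<in>(monics n :: 'a poly set). if fst x ^ snd x dvd f then degree (fst x) else 0) =
          degree (fst x) * card (UNIV::'a set) ^ (n - snd x * degree (fst x))"
      using x(1) by (simp add: sum.If_cases[OF finite_monics] Int_def)
  qed
  finally show ?thesis .
qed

lemma sum_degree_monics_normalised:
  "real n = (\<Sum>x\<in>(prime_powers_upto n :: ('a::{finite,field_gcd} poly \<times> nat) set).
      real (degree (fst x)) / real (card (UNIV::'a set)) ^ (snd x * degree (fst x)))"
proof -
  let ?q = "real (card (UNIV::'a set))"
  have q0: "?q \<noteq> 0" using card_ge_2[where 'a='a] by auto
  have "real n * ?q ^ n = (\<Sum>x\<in>(prime_powers_upto n :: ('a poly \<times> nat) set).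
           real (degree (fst x)) * ?q ^ (n - snd x * degree (fst x)))"
    by (subst of_nat_power[symmetric], subst of_nat_mult[symmetric], subst sum_degree_monics) simp
  also have "\<dots> = (\<Sum>x\<in>(prime_powers_upto n :: ('a poly \<times> nat) set).
           real (degree (fst x)) / ?q ^ (snd x * degree (fst x))) * ?q ^ n"
    unfolding sum_distrib_right
    by (intro sum.cong refl) (auto simp: prime_powers_upto_def power_diff q0)
  finally show ?thesis using q0 by simp
qed

text \<open>Gauss's formula: \<Sum>_{d | n} d \<pi>(d) = q^n, in the form
  \<Sum> deg P over prime powers P^i of degree exactly n. It is the difference of the
  normalised identities for n and n - 1.\<close>
lemma gauss_formula:
  assumes n: "n \<ge> 1"
  shows "(\<Sum>x\<in>(prime_powers_of_degree n :: ('a::{finite,field_gcd} poly \<times> nat) set). degree (fst x)) =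
         card (UNIV::'a set) ^ n"
proof -
  let ?q = "real (card (UNIV::'a set))"
  let ?f = "\<lambda>x::'a poly \<times> nat. real (degree (fst x)) / ?q ^ (snd x * degree (fst x))"
  have q0: "?q \<noteq> 0" using card_ge_2[where 'a='a] by auto
  have split: "(prime_powers_upto n :: ('a poly \<times> nat) set) =
                 prime_powers_upto (n - 1) \<union> prime_powers_of_degree n"
    using n by (auto simp: prime_powers_upto_def prime_powers_of_degree_def)
  have disj: "prime_powers_upto (n - 1) \<inter> (prime_powers_of_degree n :: ('a poly \<times> nat) set) = {}"
  proof -
    have False if "x \<in> prime_powers_upto (n - 1)" "x \<in> (prime_powers_of_degree n :: ('a poly \<times> nat) set)" for x
    proof -
      have "snd x * degree (fst x) \<le> n - 1" "snd x * degree (fst x) = n"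
        using that by (cases x; auto simp: prime_powers_upto_def prime_powers_of_degree_def)+
      thus False using n by linarith
    qed
    thus ?thesis by blast
  qed
  have "real n = real (n - 1) + sum ?f (prime_powers_of_degree n)"
    using sum.union_disjoint[OF finite_prime_powers_upto finite_prime_powers_of_degree disj, of ?f]
    unfolding split[symmetric] sum_degree_monics_normalised[symmetric] by simp
  also have "sum ?f (prime_powers_of_degree n) =
      (\<Sum>x\<in>(prime_powers_of_degree n :: ('a poly \<times> nat) set). real (degree (fst x))) / ?q ^ n"
    unfolding sum_divide_distrib by (intro sum.cong refl) (auto simp: prime_powers_of_degree_def)
  finally have "(\<Sum>x\<in>(prime_powers_of_degree n :: ('a poly \<times> nat) set). real (degree (fst x))) = ?q ^ n"
    using n q0 by (simp add: field_simps)
  thus ?thesis by (metis of_nat_eq_iff of_nat_power of_nat_sum)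
qed

definition irreducibles :: "nat \<Rightarrow> 'a::field_gcd poly set" where
  "irreducibles n = {P. monic P \<and> irreducible P \<and> degree P = n}"

lemma finite_irreducibles: "finite (irreducibles n :: 'a::{finite,field_gcd} poly set)"
  by (rule finite_subset[OF _ finite_monics[of n]]) (auto simp: irreducibles_def monics_def)

text \<open>Proper prime powers P^i (i \<ge> 2) of degree N have deg P \<le> N/2, so they contribute
  at most N (N/2 + 1) q^(N/2) to Gauss's formula.\<close>
lemma proper_prime_powers_bound:
  "(\<Sum>x\<in>{x \<in> (prime_powers_of_degree N :: ('a::{finite,field_gcd} poly \<times> nat) set). snd x \<ge> 2}.
      degree (fst x)) \<le> N * ((N div 2 + 1) * card (UNIV::'a set) ^ (N div 2))"
proof -
  define B where "B = {x \<in> (prime_powers_of_degree N :: ('a poly \<times> nat) set). snd x \<ge> 2}"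
  have deg: "degree (fst x) \<le> N div 2" "degree (fst x) \<le> N" if "x \<in> B" for x
  proof -
    have "2 \<le> snd x" "snd x * degree (fst x) = N"
      using that by (auto simp: B_def prime_powers_of_degree_def)
    hence "2 * degree (fst x) \<le> N" using mult_le_mono1[of 2 "snd x" "degree (fst x)"] by simp
    thus "degree (fst x) \<le> N div 2" "degree (fst x) \<le> N" by presburger+
  qed
  have "inj_on fst B"
  proof (rule inj_onI)
    fix x y assume "x \<in> B" "y \<in> B" "fst x = fst y"
    moreover from this have "degree (fst x) > 0"
      by (auto simp: B_def prime_powers_of_degree_def intro: irreducible_degree_pos)
    ultimately show "x = y" by (auto simp: B_def prime_powers_of_degree_def)
  qed
  moreover have "fst ` B \<subseteq> {P::'a poly. monic P \<and> degree P \<le> N div 2}"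
    using deg by (auto simp: B_def prime_powers_of_degree_def)
  moreover have "finite {P::'a poly. monic P \<and> degree P \<le> N div 2}"
    by (rule finite_subset[OF _ finite_degree_le]) auto
  ultimately have "card B \<le> card {P::'a poly. monic P \<and> degree P \<le> N div 2}"
    by (simp add: card_image[symmetric] card_mono)
  also have "\<dots> \<le> (N div 2 + 1) * card (UNIV::'a set) ^ (N div 2)"
    by (rule card_monics_degree_le)
  finally have card_B: "card B \<le> (N div 2 + 1) * card (UNIV::'a set) ^ (N div 2)" .
  have "(\<Sum>x\<in>B. degree (fst x)) \<le> card B * N"
    using sum_bounded_above[of B "\<lambda>x. degree (fst x)" N] deg(2) by auto
  also have "\<dots> \<le> (N div 2 + 1) * card (UNIV::'a set) ^ (N div 2) * N"
    using card_B by (rule mult_le_mono1)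
  also have "\<dots> = N * ((N div 2 + 1) * card (UNIV::'a set) ^ (N div 2))" by (rule mult.commute)
  finally show ?thesis by (simp only: B_def)
qed

lemma irreducible_count_bounds:
  assumes N: "N \<ge> 1"
  shows "N * card (irreducibles N :: 'a::{finite,field_gcd} poly set) \<le> card (UNIV::'a set) ^ N"
    and "card (UNIV::'a set) ^ N \<le>
           N * card (irreducibles N :: 'a poly set) + N * ((N div 2 + 1) * card (UNIV::'a set) ^ (N div 2))"
proof -
  define A where "A = (\<lambda>P. (P, 1::nat)) ` (irreducibles N :: 'a poly set)"
  define B where "B = {x \<in> (prime_powers_of_degree N :: ('a poly \<times> nat) set). snd x \<ge> 2}"
  have "prime_powers_of_degree N = A \<union> B" "A \<inter> B = {}"
    by (auto simp: A_def B_def prime_powers_of_degree_def irreducibles_def)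
  moreover have "finite A" "finite B"
    using finite_irreducibles finite_prime_powers_of_degree[of N] by (auto simp: A_def B_def)
  ultimately have "card (UNIV::'a set) ^ N = (\<Sum>x\<in>A. degree (fst x)) + (\<Sum>x\<in>B. degree (fst x))"
    using gauss_formula[OF N, where 'a='a] by (simp add: sum.union_disjoint)
  moreover have "(\<Sum>x\<in>A. degree (fst x)) = N * card (irreducibles N :: 'a poly set)"
    unfolding A_def by (subst sum.reindex) (auto simp: inj_on_def irreducibles_def)
  moreover have "(\<Sum>x\<in>B. degree (fst x)) \<le> N * ((N div 2 + 1) * card (UNIV::'a set) ^ (N div 2))"
    unfolding B_def by (rule proper_prime_powers_bound)
  ultimately show "N * card (irreducibles N :: 'a poly set) \<le> card (UNIV::'a set) ^ N"
    and "card (UNIV::'a set) ^ N \<le>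
           N * card (irreducibles N :: 'a poly set) + N * ((N div 2 + 1) * card (UNIV::'a set) ^ (N div 2))"
    by linarith+
qed

subsection \<open>The character on squares\<close>

text \<open>If P is coprime to h, every prime factor of h^2 occurs to an even power and does
  not divide P, so each Legendre symbol factor of chi P (h^2) is (\<plusminus>1)^even = 1.\<close>
lemma chi_square_eq_1:
  fixes P h :: "'a::field_gcd poly"
  assumes "coprime P h" "h \<noteq> 0"
  shows "chi P (h ^ 2) = 1"
proof -
  have "leg_sym P Q ^ multiplicity Q (h ^ 2) = 1" if Q: "Q \<in> prime_factors (h ^ 2)" for Q
  proof -
    have pr: "prime Q" and "Q dvd h ^ 2"
      using Q by (auto dest: in_prime_factors_imp_prime in_prime_factors_imp_dvd)
    hence "Q dvd h" by (simp add: prime_dvd_power_iff)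
    moreover have "\<not> is_unit Q" using pr not_prime_unit by blast
    ultimately have "\<not> Q dvd P" using assms(1) coprime_common_divisor by blast
    hence "leg_sym P Q = 1 \<or> leg_sym P Q = -1" by (auto simp: leg_sym_def)
    moreover have "multiplicity Q (h ^ 2) = 2 * multiplicity Q h"
      using pr assms(2) by (simp add: prime_elem_multiplicity_power_distrib)
    ultimately show ?thesis by (auto simp: power_mult)
  qed
  thus ?thesis by (simp add: chi_def jac_sym_def)
qed

lemma irreducible_coprime_smaller_degree:
  fixes P h :: "'a::field_gcd poly"
  assumes "irreducible P" "h \<noteq> 0" "degree h < degree P"
  shows "coprime P h"
proof (rule prime_elem_imp_coprime)
  show "prime_elem P" using assms(1) by (rule irreducible_imp_prime_elem)
  show "\<not> P dvd h"
  proof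
    assume "P dvd h"
    hence "degree P \<le> degree h" using assms(2) by (rule dvd_imp_degree_le)
    thus False using assms(3) by simp
  qed
qed

subsection \<open>Summing the divisor function over squares\<close>

text \<open>d(f) counts the monic divisors of f (the cofactor of a monic divisor is monic).\<close>
lemma divisor_count_eq_card_monic_divisors:
  fixes f :: "'a::field_gcd poly"
  assumes f: "monic f"
  shows "divisor_count f = card {a. monic a \<and> a dvd f}"
proof -
  let ?S = "{(h1, h2). monic h1 \<and> monic h2 \<and> h1 * h2 = f}"
  have "inj_on fst ?S"
    by (rule inj_onI) (auto dest: monic_nonzero)
  moreover have "fst ` ?S = {a. monic a \<and> a dvd f}"
  proof (intro equalityI subsetI)
    fix a assume "a \<in> {a. monic a \<and> a dvd f}"
    then obtain b where "monic a" "f = a * b" by auto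
    moreover from this have "monic b" using f monic_cofactor by auto
    ultimately show "a \<in> fst ` ?S" by force
  qed auto
  ultimately show ?thesis unfolding divisor_count_def by (simp add: card_image[symmetric])
qed

lemma finite_monic_divisors:
  "(f::'a::{finite,field_gcd} poly) \<noteq> 0 \<Longrightarrow> finite {a. monic a \<and> a dvd f}"
  by (rule finite_subset[OF _ finite_degree_le[of "degree f"]]) (auto intro: dvd_imp_degree_le)

definition monic_triples :: "nat \<Rightarrow> ('a::field_gcd poly \<times> 'a poly \<times> 'a poly) set" where
  "monic_triples n = {(g, u, v). monic g \<and> monic u \<and> monic v \<and> degree g + degree u + degree v = n}"

definition coprime_triples :: "nat \<Rightarrow> ('a::field_gcd poly \<times> 'a poly \<times> 'a poly) set" where
  "coprime_triples n = {(g, u, v). monic g \<and> monic u \<and> monic v \<and> coprime u v \<and>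
                                   degree g + degree u + degree v = n}"

lemma finite_monic_triples:
  "finite (monic_triples n :: ('a::{finite,field_gcd} poly \<times> 'a poly \<times> 'a poly) set)"
proof (rule finite_subset)
  show "monic_triples n \<subseteq> {p::'a poly. degree p \<le> n} \<times> {p. degree p \<le> n} \<times> {p. degree p \<le> n}"
    by (auto simp: monic_triples_def)
qed (use finite_degree_le in auto)

lemma finite_coprime_triples:
  "finite (coprime_triples n :: ('a::{finite,field_gcd} poly \<times> 'a poly \<times> 'a poly) set)"
  by (rule finite_subset[OF _ finite_monic_triples[of n]]) (auto simp: monic_triples_def coprime_triples_def)

text \<open>Every monic divisor a of h^2 (h monic) has the form a = g u^2 with h = g u v and u, v
  coprime: take g u = gcd a h.\<close>
lemma square_divisor_decomposition:
  fixes h a :: "'a::field_gcd poly"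
  assumes h: "monic h" and a: "monic a" and dvd: "a dvd h ^ 2"
  obtains g u v where "monic g" "monic u" "monic v" "coprime u v" "h = g * u * v" "a = g * u ^ 2"
proof -
  define w where "w = gcd a h"
  obtain u v where au: "a = w * u" and hv: "h = w * v" and cop: "coprime u v"
    using gcd_coprime_decomposition[of a h] monic_nonzero[OF a] unfolding w_def by blast
  have mw: "monic w" using monic_gcd monic_nonzero[OF a] by (simp add: w_def)
  have mu: "monic u" using monic_cofactor[of w u] a au mw by simp
  have mv: "monic v" using monic_cofactor[of w v] h hv mw by simp
  have "w * u dvd w * (w * v ^ 2)" using dvd au hv by (simp add: power2_eq_square algebra_simps)
  hence "u dvd w * v ^ 2" using monic_nonzero[OF mw] by simp
  hence "u dvd w" using cop by (simp add: coprime_dvd_mult_left_iff)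
  then obtain g where wg: "w = u * g" by auto
  have "monic g" using monic_cofactor[of u g] mw wg mu by simp
  moreover have "h = g * u * v" "a = g * u ^ 2" using au hv wg by (simp_all add: power2_eq_square algebra_simps)
  ultimately show thesis using that mu mv cop by blast
qed

lemma square_divisor_pairs_eq:
  "Sigma (monics n) (\<lambda>h. {a. monic a \<and> a dvd h ^ 2}) =
   (\<lambda>(g, u, v). (g * u * v, g * u ^ 2)) ` (coprime_triples n :: ('a::field_gcd poly \<times> _ \<times> _) set)"
proof (intro equalityI subsetI)
  fix x assume "x \<in> Sigma (monics n) (\<lambda>h. {a. monic a \<and> a dvd h ^ 2})"
  then obtain h a where x: "x = (h, a)" "monic h" "degree h = n" "monic a" "a dvd h ^ 2"
    by (auto simp: monics_def)
  obtain g u v where gu: "monic g" "monic u" "monic v" "coprime u v" "h = g * u * v" "a = g * u ^ 2"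
    by (rule square_divisor_decomposition[OF x(2) x(4) x(5)])
  have "degree g + degree u + degree v = n"
    using x(3) gu(5) monic_nonzero[OF gu(1)] monic_nonzero[OF gu(2)] monic_nonzero[OF gu(3)]
    by (simp add: degree_mult_eq)
  hence "(g, u, v) \<in> coprime_triples n" using gu(1-4) by (simp add: coprime_triples_def)
  moreover have "x = (g * u * v, g * u ^ 2)" using x(1) gu(5,6) by simp
  ultimately show "x \<in> (\<lambda>(g, u, v). (g * u * v, g * u ^ 2)) ` coprime_triples n" by force
next
  fix x assume "x \<in> (\<lambda>(g, u, v). (g * u * v, g * u ^ 2)) ` (coprime_triples n :: (_ \<times> _ \<times> 'a poly) set)"
  then obtain g u v :: "'a poly" where x: "x = (g * u * v, g * u ^ 2)" "monic g" "monic u" "monic v"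
      "degree g + degree u + degree v = n"
    by (auto simp: coprime_triples_def)
  have "degree (g * u * v) = n"
    using x(5) monic_nonzero[OF x(2)] monic_nonzero[OF x(3)] monic_nonzero[OF x(4)]
    by (simp add: degree_mult_eq)
  moreover have "g * u ^ 2 dvd (g * u * v) ^ 2"
    by (rule dvdI[of _ _ "g * v ^ 2"]) (simp add: power2_eq_square ac_simps)
  moreover have "monic (g * u * v)" "monic (g * u ^ 2)"
    using x(2-4) by (simp_all add: monic_mult monic_power)
  ultimately show "x \<in> Sigma (monics n) (\<lambda>h. {a. monic a \<and> a dvd h ^ 2})"
    using x(1) by (simp add: monics_def)
qed

text \<open>The triple is recovered from (g u v, g u^2), since g u = gcd (g u^2) (g u v).\<close>
lemma square_divisor_param_unique:
  fixes g u v g' u' v' :: "'a::field_gcd poly"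
  assumes "monic g" "monic u" "coprime u v" "monic g'" "monic u'" "coprime u' v'"
    and eq: "g * u * v = g' * u' * v'" "g * u ^ 2 = g' * u' ^ 2"
  shows "g = g' \<and> u = u' \<and> v = v'"
proof -
  have sq: "g * u * u = g' * u' * u'" using eq(2) by (simp add: power2_eq_square mult.assoc)
  have "g * u = gcd (g * u * u) (g * u * v)"
    by (rule gcd_mult_coprime[OF monic_mult[OF assms(1,2)] assms(3), symmetric])
  also have "\<dots> = gcd (g' * u' * u') (g' * u' * v')" by (simp only: sq eq(1))
  also have "\<dots> = g' * u'" by (rule gcd_mult_coprime[OF monic_mult[OF assms(4,5)] assms(6)])
  finally have gu: "g * u = g' * u'" .
  have nz: "g * u \<noteq> 0" "u \<noteq> 0"
    using monic_nonzero[OF monic_mult[OF assms(1,2)]] monic_nonzero[OF assms(2)] by simp_all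
  have "u = u'" using sq nz(1) unfolding gu by simp
  moreover have "v = v'" using eq(1) nz(1) unfolding gu by simp
  moreover have "g = g'" using gu nz(2) unfolding \<open>u = u'\<close> by simp
  ultimately show ?thesis by blast
qed

lemma square_divisor_param_inj:
  "inj_on (\<lambda>(g, u, v). (g * u * v, g * u ^ 2)) (coprime_triples n :: ('a::field_gcd poly \<times> _ \<times> _) set)"
proof (rule inj_onI)
  fix x y :: "'a poly \<times> 'a poly \<times> 'a poly"
  assume mem: "x \<in> coprime_triples n" "y \<in> coprime_triples n"
    and eq: "(\<lambda>(g, u, v). (g * u * v, g * u ^ 2)) x = (\<lambda>(g, u, v). (g * u * v, g * u ^ 2)) y"
  obtain g u v g' u' v' where xy: "x = (g, u, v)" "y = (g', u', v')" by (cases x, cases y)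
  show "x = y"
    using square_divisor_param_unique[of g u v g' u' v'] mem eq
    unfolding xy by (simp add: coprime_triples_def)
qed

lemma sum_divisor_count_squares:
  "(\<Sum>h\<in>(monics n :: 'a::{finite,field_gcd} poly set). divisor_count (h ^ 2)) =
   card (coprime_triples n :: ('a poly \<times> 'a poly \<times> 'a poly) set)"
proof -
  have "(\<Sum>h\<in>(monics n :: 'a poly set). divisor_count (h ^ 2)) =
        (\<Sum>h\<in>(monics n :: 'a poly set). card {a. monic a \<and> a dvd h ^ 2})"
  proof (intro sum.cong refl)
    fix h :: "'a poly" assume "h \<in> monics n"
    hence "monic (h ^ 2)" by (simp add: monics_def monic_power)
    thus "divisor_count (h ^ 2) = card {a. monic a \<and> a dvd h ^ 2}"
      by (rule divisor_count_eq_card_monic_divisors)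
  qed
  also have "\<dots> = card (Sigma (monics n :: 'a poly set) (\<lambda>h. {a. monic a \<and> a dvd h ^ 2}))"
  proof (rule card_SigmaI[symmetric, OF finite_monics], intro ballI)
    fix h :: "'a poly" assume "h \<in> monics n"
    hence "h ^ 2 \<noteq> 0" by (simp add: monics_def monic_nonzero)
    thus "finite {a. monic a \<and> a dvd h ^ 2}" by (rule finite_monic_divisors)
  qed
  also have "\<dots> = card (coprime_triples n :: ('a poly \<times> 'a poly \<times> 'a poly) set)"
    unfolding square_divisor_pairs_eq by (rule card_image[OF square_divisor_param_inj])
  finally show ?thesis .
qed

text \<open>Extracting w = gcd u v identifies a monic triple (g, wu, wv) of total degree n with the
  pair (w, (g, u, v)), where (g, u, v) is a coprime triple of total degree n - 2 deg w.\<close>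
lemma monic_triples_by_gcd:
  "monic_triples n = (\<lambda>(w, g, u, v). (g, w * u, w * v)) `
     {(w::'a::field_gcd poly, z::'a poly \<times> 'a poly \<times> 'a poly). monic w \<and> degree w \<le> n div 2 \<and> z \<in> coprime_triples (n - 2 * degree w)}"
proof (intro equalityI subsetI)
  fix y assume "y \<in> (monic_triples n :: ('a poly \<times> 'a poly \<times> 'a poly) set)"
  then obtain g a b where y: "y = (g, a, b)" "monic g" "monic a" "monic b"
      "degree g + degree a + degree b = n"
    by (auto simp: monic_triples_def)
  define w where "w = gcd a b"
  obtain u v where au: "a = w * u" and bv: "b = w * v" and cop: "coprime u v"
    using gcd_coprime_decomposition[of a b] monic_nonzero[OF y(3)] unfolding w_def by blast
  have mw: "monic w" using monic_gcd monic_nonzero[OF y(3)] by (simp add: w_def)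
  have mu: "monic u" using monic_cofactor[of w u] y(3) au mw by simp
  have mv: "monic v" using monic_cofactor[of w v] y(4) bv mw by simp
  have "degree a = degree w + degree u" "degree b = degree w + degree v"
    using au bv monic_nonzero[OF mw] monic_nonzero[OF mu] monic_nonzero[OF mv]
    by (simp_all add: degree_mult_eq)
  hence "degree w \<le> n div 2" "degree g + degree u + degree v = n - 2 * degree w" using y(5) by auto
  hence "(w, g, u, v) \<in> {(w, z). monic w \<and> degree w \<le> n div 2 \<and> z \<in> coprime_triples (n - 2 * degree w)}"
    using mw y(2) mu mv cop by (simp add: coprime_triples_def)
  moreover have "y = (\<lambda>(w, g, u, v). (g, w * u, w * v)) (w, g, u, v)" using y(1) au bv by simp
  ultimately show "y \<in> (\<lambda>(w, g, u, v). (g, w * u, w * v)) `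
     {(w, z). monic w \<and> degree w \<le> n div 2 \<and> z \<in> coprime_triples (n - 2 * degree w)}"
    by (rule rev_image_eqI)
next
  fix y assume "y \<in> (\<lambda>(w, g, u, v). (g, w * u, w * v)) `
     {(w::'a poly, z::'a poly \<times> 'a poly \<times> 'a poly). monic w \<and> degree w \<le> n div 2 \<and> z \<in> coprime_triples (n - 2 * degree w)}"
  then obtain w g u v :: "'a poly" where y: "y = (g, w * u, w * v)" "monic w" "degree w \<le> n div 2"
      "monic g" "monic u" "monic v" "degree g + degree u + degree v = n - 2 * degree w"
    by (auto simp: coprime_triples_def)
  have "degree g + degree (w * u) + degree (w * v) = n"
    using y(3,7) monic_nonzero[OF y(2)] monic_nonzero[OF y(5)] monic_nonzero[OF y(6)]
    by (simp add: degree_mult_eq)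
  thus "y \<in> monic_triples n" using y(1,2,4-6) by (simp add: monic_triples_def monic_mult)
qed

lemma monic_triples_by_gcd_inj:
  "inj_on (\<lambda>(w, g, u, v). (g, w * u, w * v))
     {(w::'a::field_gcd poly, z::'a poly \<times> 'a poly \<times> 'a poly). monic w \<and> degree w \<le> n div 2 \<and> z \<in> coprime_triples (n - 2 * degree w)}"
proof (rule inj_onI)
  fix x y :: "'a poly \<times> 'a poly \<times> 'a poly \<times> 'a poly"
  assume mem: "x \<in> {(w, z). monic w \<and> degree w \<le> n div 2 \<and> z \<in> coprime_triples (n - 2 * degree w)}"
              "y \<in> {(w, z). monic w \<and> degree w \<le> n div 2 \<and> z \<in> coprime_triples (n - 2 * degree w)}"
    and eq: "(\<lambda>(w, g, u, v). (g, w * u, w * v)) x = (\<lambda>(w, g, u, v). (g, w * u, w * v)) y"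
  obtain w g u v w' g' u' v' where xy: "x = (w, g, u, v)" "y = (w', g', u', v')"
    by (cases x, cases y)
  have m: "monic w" "coprime u v" "monic w'" "coprime u' v'"
    using mem unfolding xy by (simp_all add: coprime_triples_def)
  have eq': "g = g'" "w * u = w' * u'" "w * v = w' * v'" using eq unfolding xy by simp_all
  have "w = w'"
    using gcd_mult_coprime[OF m(1,2)] gcd_mult_coprime[OF m(3,4)] eq'(2,3) by simp
  moreover from this have "u = u'" "v = v'" using eq'(2,3) monic_nonzero[OF m(1)] by simp_all
  ultimately show "x = y" using xy eq'(1) by simp
qed

text \<open>Counting both sides of the gcd decomposition (there are q^i choices of w of degree i).\<close>
lemma card_monic_triples_by_gcd:
  "card (monic_triples n :: ('a::{finite,field_gcd} poly \<times> 'a poly \<times> 'a poly) set) =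
   (\<Sum>i\<le>n div 2. card (UNIV::'a set) ^ i * card (coprime_triples (n - 2 * i) :: ('a poly \<times> _ \<times> _) set))"
proof -
  have "card (monic_triples n :: ('a poly \<times> 'a poly \<times> 'a poly) set) =
        card {(w::'a poly, z::'a poly \<times> 'a poly \<times> 'a poly). monic w \<and> degree w \<le> n div 2 \<and> z \<in> coprime_triples (n - 2 * degree w)}"
    unfolding monic_triples_by_gcd by (simp add: card_image monic_triples_by_gcd_inj)
  also have "\<dots> = (\<Sum>i\<le>n div 2. card (UNIV::'a set) ^ i * card (coprime_triples (n - 2 * i) :: ('a poly \<times> _ \<times> _) set))"
    by (rule card_graded_by_degree[where Y = "\<lambda>i. coprime_triples (n - 2 * i)"]) (rule finite_coprime_triples)
  finally show ?thesis .
qed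

text \<open>Splitting off the term i = 0: #monic_triples n = #coprime_triples n + q #monic_triples (n - 2).\<close>
lemma card_monic_triples_recursion:
  "card (monic_triples n :: ('a::{finite,field_gcd} poly \<times> 'a poly \<times> 'a poly) set) =
   card (coprime_triples n :: ('a poly \<times> 'a poly \<times> 'a poly) set) +
   (if n \<ge> 2 then card (UNIV::'a set) * card (monic_triples (n - 2) :: ('a poly \<times> 'a poly \<times> 'a poly) set) else 0)"
proof (cases "n \<ge> 2")
  case True
  hence nd: "n div 2 = Suc ((n - 2) div 2)" by presburger
  show ?thesis
    unfolding card_monic_triples_by_gcd[of n] card_monic_triples_by_gcd[of "n - 2"] nd sum.atMost_Suc_shift
    using True by (simp add: sum_distrib_left mult.assoc algebra_simps)
next
  case False
  hence "n div 2 = 0" by simp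
  thus ?thesis using False by (simp add: card_monic_triples_by_gcd[of n])
qed

lemma card_monic_pairs:
  "card {(u::'a::{finite,field_gcd} poly, v::'a poly). monic u \<and> degree u \<le> m \<and> v \<in> monics (m - degree u)} =
   (m + 1) * card (UNIV::'a set) ^ m"
proof -
  have "card {(u::'a poly, v::'a poly). monic u \<and> degree u \<le> m \<and> v \<in> monics (m - degree u)} =
        (\<Sum>i\<le>m. card (UNIV::'a set) ^ i * card (monics (m - i) :: 'a poly set))"
    by (rule card_graded_by_degree[where Y = "\<lambda>i. monics (m - i)"]) (rule finite_monics)
  also have "\<dots> = (\<Sum>i\<le>m. card (UNIV::'a set) ^ m)"
    by (intro sum.cong refl) (simp add: card_monics power_add[symmetric])
  finally show ?thesis by simp
qed

lemma double_sum_atMost: "2 * (\<Sum>i\<le>n. n - i + 1) = (n + 1) * (n + 2 :: nat)"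
proof (induction n)
  case (Suc n)
  have "(\<Sum>i\<le>Suc n. Suc n - i + 1) = (n + 2) + (\<Sum>i\<le>n. n - i + 1)"
    unfolding sum.atMost_Suc_shift by simp
  thus ?case using Suc by simp
qed simp

lemma card_monic_triples:
  "2 * card (monic_triples n :: ('a::{finite,field_gcd} poly \<times> 'a poly \<times> 'a poly) set) =
   (n + 1) * (n + 2) * card (UNIV::'a set) ^ n"
proof -
  let ?q = "card (UNIV::'a set)"
  define Pairs where
    "Pairs m = {(u::'a poly, v::'a poly). monic u \<and> degree u \<le> m \<and> v \<in> monics (m - degree u)}" for m
  have fin: "finite (Pairs m)" for m
    by (rule finite_subset[of _ "{p::'a poly. degree p \<le> m} \<times> {p::'a poly. degree p \<le> m}"])
       (auto simp: Pairs_def monics_def intro: finite_degree_le)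
  have "monic_triples n = {(g, z). monic g \<and> degree g \<le> n \<and> z \<in> Pairs (n - degree g)}"
    by (auto simp: monic_triples_def Pairs_def monics_def)
  hence "card (monic_triples n :: ('a poly \<times> 'a poly \<times> 'a poly) set) = (\<Sum>i\<le>n. ?q ^ i * card (Pairs (n - i)))"
    using card_graded_by_degree[where Y = "\<lambda>i. Pairs (n - i)", OF fin, where 'a='a] by simp
  also have "\<dots> = (\<Sum>i\<le>n. (n - i + 1) * ?q ^ n)"
  proof (intro sum.cong refl)
    fix i assume "i \<in> {..n}"
    hence "?q ^ i * ?q ^ (n - i) = ?q ^ n" by (simp flip: power_add)
    thus "?q ^ i * card (Pairs (n - i)) = (n - i + 1) * ?q ^ n"
      unfolding Pairs_def card_monic_pairs by (metis mult.left_commute)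
  qed
  also have "\<dots> = (\<Sum>i\<le>n. n - i + 1) * ?q ^ n" by (simp add: sum_distrib_right)
  finally show ?thesis using double_sum_atMost[of n] by (metis mult.assoc)
qed

text \<open>The mean value of d(h^2) over monic h of degree n, as a function of q.\<close>
definition mean_divisor_count_square :: "real \<Rightarrow> nat \<Rightarrow> real" where
  "mean_divisor_count_square q n = real ((n + 1) * (n + 2)) / 2 - real (n * (n - 1)) / (2 * q)"

text \<open>Solving the recursion: #coprime_triples n = q^n ((n+1)(n+2)/2 - n(n-1)/(2q)).\<close>
lemma card_coprime_triples:
  "real (card (coprime_triples n :: ('a::{finite,field_gcd} poly \<times> 'a poly \<times> 'a poly) set)) =
   real (card (UNIV::'a set)) ^ n * mean_divisor_count_square (real (card (UNIV::'a set))) n"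
proof -
  let ?q = "real (card (UNIV::'a set))"
  let ?a = "\<lambda>m. real (card (monic_triples m :: ('a poly \<times> 'a poly \<times> 'a poly) set))"
  have q0: "?q > 0" using card_ge_2[where 'a='a] by simp
  have a: "?a m = real ((m + 1) * (m + 2)) / 2 * ?q ^ m" for m
    using arg_cong[OF card_monic_triples[of m, where 'a='a], of real] by (simp add: algebra_simps)
  show ?thesis
  proof (cases "n \<ge> 2")
    case True
    define k where "k = n - 2"
    have k: "n = k + 2" using True by (simp add: k_def)
    have rec: "real (card (coprime_triples n :: ('a poly \<times> _ \<times> _) set)) = ?a n - ?q * ?a k"
      using arg_cong[OF card_monic_triples_recursion[of n, where 'a='a], of real] True k by simp
    have nk: "n * (n - 1) = (k + 1) * (k + 2)" using k by simp
    have qn: "?q ^ n = ?q * (?q * ?q ^ k)" using k by simp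
    have "?q ^ n * mean_divisor_count_square ?q n =
          real ((n + 1) * (n + 2)) / 2 * ?q ^ n - ?q * (real ((k + 1) * (k + 2)) / 2 * ?q ^ k)"
      unfolding mean_divisor_count_square_def nk qn using q0 by (simp add: field_simps)
    thus ?thesis unfolding rec a by simp
  next
    case False
    hence "n = 0 \<or> n = 1" by auto
    moreover have "real (card (coprime_triples n :: ('a poly \<times> _ \<times> _) set)) = ?a n"
      using arg_cong[OF card_monic_triples_recursion[of n, where 'a='a], of real] False by simp
    ultimately show ?thesis using a[of n] by (auto simp: mean_divisor_count_square_def)
  qed
qed

subsection \<open>The inner sum over squares\<close>

lemma monic_squares_eq:
  "{f::'a::field_gcd poly. monic f \<and> degree f \<le> 2 * g \<and> is_monic_square f} =
   (\<lambda>h. h ^ 2) ` {h. monic h \<and> degree h \<le> g}"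
proof -
  have "degree (h ^ 2) = 2 * degree h" if "monic h" for h :: "'a poly"
    using monic_nonzero[OF that] by (simp add: degree_power_eq)
  thus ?thesis by (auto simp: is_monic_square_def monic_power)
qed

lemma sqrt_pnorm_square:
  "sqrt (pnorm (h ^ 2 :: 'a::{finite,field_gcd} poly)) = real (card (UNIV::'a set)) ^ degree h"
proof (cases "h = 0")
  case False
  hence "pnorm (h ^ 2) = (real (card (UNIV::'a set)) ^ degree h) ^ 2"
    by (simp add: pnorm_def degree_power_eq power_mult mult.commute)
  thus ?thesis by simp
qed (simp add: pnorm_def)

lemma inner_sum_eq:
  fixes P :: "'a::{finite,field_gcd} poly"
  assumes P: "irreducible P" "degree P = 2 * g + 1"
  shows "(\<Sum>f\<in>{f::'a poly. monic f \<and> degree f \<le> 2 * g \<and> is_monic_square f}.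
           real_of_int (chi P f) * real (divisor_count f) / sqrt (pnorm f)) =
         (\<Sum>n\<le>g. mean_divisor_count_square (real (card (UNIV::'a set))) n)"
proof -
  let ?q = "real (card (UNIV::'a set))"
  let ?F = "\<lambda>f::'a poly. real_of_int (chi P f) * real (divisor_count f) / sqrt (pnorm f)"
  have inj: "inj_on (\<lambda>h::'a poly. h ^ 2) {h. monic h \<and> degree h \<le> g}"
    by (auto simp: inj_on_def intro: monic_square_inj)
  have "(\<Sum>f\<in>{f::'a poly. monic f \<and> degree f \<le> 2 * g \<and> is_monic_square f}. ?F f) =
        (\<Sum>h\<in>{h::'a poly. monic h \<and> degree h \<le> g}. ?F (h ^ 2))"
    unfolding monic_squares_eq by (simp add: sum.reindex[OF inj])
  also have "\<dots> = (\<Sum>h\<in>{h::'a poly. monic h \<and> degree h \<le> g}. real (divisor_count (h ^ 2)) / ?q ^ degree h)"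
  proof (intro sum.cong refl)
    fix h :: "'a poly" assume "h \<in> {h. monic h \<and> degree h \<le> g}"
    hence "h \<noteq> 0" "degree h < degree P" using P(2) monic_nonzero by auto
    hence "chi P (h ^ 2) = 1" using P(1) by (simp add: chi_square_eq_1 irreducible_coprime_smaller_degree)
    thus "?F (h ^ 2) = real (divisor_count (h ^ 2)) / ?q ^ degree h" by (simp add: sqrt_pnorm_square)
  qed
  also have "\<dots> = (\<Sum>n\<le>g. \<Sum>h\<in>(monics n :: 'a poly set). real (divisor_count (h ^ 2)) / ?q ^ degree h)"
  proof -
    have "{h::'a poly. monic h \<and> degree h \<le> g} = (\<Union>n\<in>{..g}. monics n)" by (auto simp: monics_def)
    thus ?thesis using finite_monics by (simp only:) (rule sum.UNION_disjoint; auto simp: monics_def)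
  qed
  also have "\<dots> = (\<Sum>n\<le>g. mean_divisor_count_square ?q n)"
  proof (intro sum.cong refl)
    fix n
    have "(\<Sum>h\<in>(monics n :: 'a poly set). real (divisor_count (h ^ 2)) / ?q ^ degree h) =
          real (\<Sum>h\<in>(monics n :: 'a poly set). divisor_count (h ^ 2)) / ?q ^ n"
      by (simp add: sum_divide_distrib monics_def)
    also have "\<dots> = mean_divisor_count_square ?q n"
      using card_ge_2[where 'a='a] by (simp add: sum_divisor_count_squares card_coprime_triples)
    finally show "(\<Sum>h\<in>(monics n :: 'a poly set). real (divisor_count (h ^ 2)) / ?q ^ degree h) =
                  mean_divisor_count_square ?q n" .
  qed
  finally show ?thesis .
qed

subsection \<open>Asymptotics\<close>

definition main_term :: "real \<Rightarrow> nat \<Rightarrow> real" where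
  "main_term q g = (1/12) * (1 - 1/q) * real g * real (g + 1) * real (2 * g + 1)"

text \<open>Each mean value is (1 - 1/q)(n^2)/2 plus a term of order n, so the partial sums equal
  the main term up to an error between 0 and (g+1)^2.\<close>
lemma partial_sum_mean_bounds:
  assumes q: "q \<ge> 1"
  shows "main_term q g \<le> (\<Sum>n\<le>g. mean_divisor_count_square q n) \<and>
         (\<Sum>n\<le>g. mean_divisor_count_square q n) \<le> main_term q g + real (g + 1) ^ 2"
proof (induction g)
  case 0 thus ?case by (simp add: main_term_def mean_divisor_count_square_def)
next
  case (Suc g)
  define m where "m = real (Suc g)"
  define X where "X = (1 - 1/q) * m^2 / 2"
  have main: "main_term q (Suc g) = main_term q g + X"
    using q unfolding X_def m_def by (simp add: main_term_def field_simps power2_eq_square)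
  have mean: "mean_divisor_count_square q (Suc g) = X + 3/2 * m + 1 + m / (2 * q)"
    using q unfolding X_def m_def by (simp add: mean_divisor_count_square_def field_simps power2_eq_square)
  have "0 \<le> m / q" "m / q \<le> m" "m \<ge> 1" using q unfolding m_def by (auto simp: divide_le_eq)
  moreover have "real (Suc g + 1) ^ 2 = real (g + 1) ^ 2 + 2 * m + 1"
    unfolding m_def by (simp add: power2_eq_square field_simps)
  ultimately show ?case using Suc.IH main mean by (simp add: field_simps)
qed

lemma main_term_bounds:
  assumes "q \<ge> 1"
  shows "0 \<le> main_term q g" "main_term q g \<le> real (g + 1) ^ 3"
proof -
  have c: "0 \<le> 1 - 1/q" "1 - 1/q \<le> 1" using assms by (auto simp: field_simps)
  have "g * (g + 1) * (2 * g + 1) \<le> (g + 1) * (g + 1) * (2 * (g + 1))" by (intro mult_le_mono) auto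
  hence A: "real g * real (g + 1) * real (2 * g + 1) \<le> 2 * real (g + 1) ^ 3"
    by (simp only: of_nat_mult[symmetric] of_nat_le_iff) (simp add: power3_eq_cube algebra_simps)
  have "main_term q g = (1/12) * ((1 - 1/q) * (real g * real (g + 1) * real (2 * g + 1)))"
    unfolding main_term_def by (simp only: mult.assoc)
  moreover have "(1 - 1/q) * (real g * real (g + 1) * real (2 * g + 1)) \<le> 1 * (2 * real (g + 1) ^ 3)"
    by (rule mult_mono) (use c A in auto)
  moreover have "0 \<le> (1 - 1/q) * (real g * real (g + 1) * real (2 * g + 1))" using c by simp
  ultimately show "0 \<le> main_term q g" "main_term q g \<le> real (g + 1) ^ 3" by auto
qed

text \<open>If p approximates X from below within E and S approximates M from above within B, then
  p S approximates X M; this is how the two approximations combine.\<close>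
lemma product_error_bound:
  fixes p X S M E B C :: real
  assumes "p \<le> X" "X - p \<le> E" "M \<le> S" "S - M \<le> B" "0 \<le> M" "M \<le> C" "0 \<le> X"
  shows "\<bar>p * S - X * M\<bar> \<le> E * (C + B) + X * B"
proof -
  have "0 \<le> (X - p) * S" "(X - p) * S \<le> E * (C + B)"
    using assms by (auto intro: mult_mono)
  moreover have "0 \<le> X * (S - M)" "X * (S - M) \<le> X * B"
    using assms by (auto intro: mult_left_mono)
  moreover have "p * S - X * M = X * (S - M) - (X - p) * S" by (simp add: algebra_simps)
  ultimately show ?thesis by linarith
qed

lemma cube_le_exp: "(n + 1 :: nat) ^ 3 \<le> 27 * 2 ^ n"
proof -
  let ?m = "n div 3"
  have "(n + 1) ^ 3 \<le> (3 * (?m + 1)) ^ 3" by (rule power_mono) simp_all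
  also have "\<dots> = 27 * (?m + 1) ^ 3" by (subst power_mult_distrib) simp
  also have "(?m + 1) ^ 3 \<le> (2 ^ ?m) ^ 3" by (rule power_mono) (simp_all add: Suc_le_eq less_exp)
  also have "((2::nat) ^ ?m) ^ 3 = 2 ^ (3 * ?m)" by (simp add: power_mult[symmetric] mult.commute)
  also have "(2::nat) ^ (3 * ?m) \<le> 2 ^ n" by (rule power_increasing) auto
  finally show ?thesis by simp
qed

text \<open>The error coming from the prime polynomial theorem, of size g^4 q^g, is negligible
  against the target q^(2g+1) g^2 / (2g+1).\<close>
lemma secondary_error_bound:
  fixes Q :: real
  assumes g: "g \<ge> 1" and Q: "Q \<ge> 2"
  shows "2 * real (g + 1) ^ 4 * Q ^ g \<le> 324 * (Q ^ (2 * g + 1) / real (2 * g + 1) * real g ^ 2)"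
proof -
  have cube: "real (g + 1) ^ 3 \<le> 27 * Q ^ g"
  proof -
    have "real ((g + 1) ^ 3) \<le> real (27 * 2 ^ g)" using cube_le_exp[of g] by (simp only: of_nat_le_iff)
    hence "real (g + 1) ^ 3 \<le> 27 * 2 ^ g" by simp
    also have "(2::real) ^ g \<le> Q ^ g" using Q by (intro power_mono) auto
    finally show ?thesis by simp
  qed
  have lin: "real (g + 1) * real (2 * g + 1) \<le> 6 * real g ^ 2"
  proof -
    have G: "real g \<ge> 1" using g by simp
    hence "real g * 1 \<le> real g * real g" by (intro mult_left_mono) auto
    hence "real g \<le> real g ^ 2" by (simp add: power2_eq_square)
    moreover have "real (g + 1) * real (2 * g + 1) = 2 * real g ^ 2 + 3 * real g + 1"
      by (simp add: algebra_simps power2_eq_square)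
    ultimately show ?thesis using G by linarith
  qed
  have "2 * real (g + 1) ^ 4 * real (2 * g + 1) = 2 * real (g + 1) ^ 3 * (real (g + 1) * real (2 * g + 1))"
    by (simp add: power_numeral_reduce)
  also have "\<dots> \<le> 2 * (27 * Q ^ g) * (6 * real g ^ 2)"
    by (rule mult_mono) (use cube lin Q in auto)
  also have "\<dots> = 324 * real g ^ 2 * Q ^ g" by simp
  finally have "2 * real (g + 1) ^ 4 * real (2 * g + 1) * Q ^ g \<le> 324 * real g ^ 2 * Q ^ g * Q ^ g"
    using Q by (intro mult_right_mono) auto
  also have "\<dots> \<le> 324 * real g ^ 2 * Q ^ (2 * g + 1)"
  proof -
    have "Q ^ g * Q ^ g = Q ^ (2 * g)" by (simp add: power_add[symmetric] mult_2)
    also have "\<dots> \<le> Q ^ (2 * g + 1)" using Q by (intro power_increasing) auto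
    finally have "Q ^ g * Q ^ g \<le> Q ^ (2 * g + 1)" .
    thus ?thesis using mult_left_mono[of _ _ "324 * real g ^ 2"] by (simp add: mult.assoc)
  qed
  finally show ?thesis by (simp add: field_simps)
qed

text \<open>Since the inner sum does not depend on P, the double sum factorises.\<close>
lemma double_sum_factorises:
  "(\<Sum>P\<in>{P::'a::{finite,field_gcd} poly. monic P \<and> irreducible P \<and> degree P = 2 * g + 1}.
      \<Sum>f\<in>{f::'a poly. monic f \<and> degree f \<le> 2 * g \<and> is_monic_square f}.
        real_of_int (chi P f) * real (divisor_count f) / sqrt (pnorm f)) =
   real (card (irreducibles (2 * g + 1) :: 'a poly set)) *
   (\<Sum>n\<le>g. mean_divisor_count_square (real (card (UNIV::'a set))) n)"
  by (simp add: inner_sum_eq irreducibles_def)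

lemma approximation_error:
  fixes g :: nat
  defines "q \<equiv> real (card (UNIV::'a::{finite,field_gcd} set))" and "N \<equiv> 2 * g + 1"
  assumes g: "g \<ge> 1"
  shows "\<bar>real (card (irreducibles N :: 'a poly set)) * (\<Sum>n\<le>g. mean_divisor_count_square q n)
           - q ^ N / real N * main_term q g\<bar> \<le> 328 * (q ^ N / real N * real g ^ 2)"
proof -
  define p where "p = real (card (irreducibles N :: 'a poly set))"
  define X where "X = q ^ N / real N"
  define S where "S = (\<Sum>n\<le>g. mean_divisor_count_square q n)"
  have Q: "q \<ge> 2" using card_ge_2[where 'a='a] by (simp add: q_def)
  have N: "N \<ge> 1" "N div 2 = g" "real N > 0" by (simp_all add: N_def)
  let ?k = "card (UNIV::'a set)" and ?c = "card (irreducibles N :: 'a poly set)"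
  have "real (N * ?c) \<le> real (?k ^ N)" "real (?k ^ N) \<le> real (N * ?c + N * ((g + 1) * ?k ^ g))"
    using irreducible_count_bounds[OF N(1), where 'a='a] N(2) by (simp_all only: of_nat_le_iff)
  hence "real N * p \<le> q ^ N" "q ^ N \<le> real N * p + real N * (real (g + 1) * q ^ g)"
    unfolding p_def q_def by (simp_all add: algebra_simps)
  hence p: "p \<le> X" "X - p \<le> real (g + 1) * q ^ g"
    using N(3) unfolding X_def by (simp_all add: field_simps)
  have S: "main_term q g \<le> S" "S - main_term q g \<le> real (g + 1) ^ 2"
    using partial_sum_mean_bounds[of q g] Q unfolding S_def by auto
  have M: "0 \<le> main_term q g" "main_term q g \<le> real (g + 1) ^ 3" using main_term_bounds Q by auto
  have "\<bar>p * S - X * main_term q g\<bar> \<le>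
          real (g + 1) * q ^ g * (real (g + 1) ^ 3 + real (g + 1) ^ 2) + X * real (g + 1) ^ 2"
    using Q by (intro product_error_bound p S M) (simp add: X_def)
  also have "\<dots> \<le> 2 * real (g + 1) ^ 4 * q ^ g + X * (4 * real g ^ 2)"
  proof (rule add_mono)
    have "real (g + 1) ^ 2 \<le> real (g + 1) ^ 3" by (intro power_increasing) auto
    hence "real (g + 1) * q ^ g * (real (g + 1) ^ 3 + real (g + 1) ^ 2) \<le>
           real (g + 1) * q ^ g * (2 * real (g + 1) ^ 3)"
      using Q by (intro mult_left_mono) auto
    also have "\<dots> = 2 * real (g + 1) ^ 4 * q ^ g" by (simp add: power_numeral_reduce mult_ac)
    finally show "real (g + 1) * q ^ g * (real (g + 1) ^ 3 + real (g + 1) ^ 2) \<le> 2 * real (g + 1) ^ 4 * q ^ g" .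
    have "real (g + 1) ^ 2 \<le> (2 * real g) ^ 2" using g by (intro power_mono) auto
    thus "X * real (g + 1) ^ 2 \<le> X * (4 * real g ^ 2)"
      using Q unfolding X_def by (intro mult_left_mono) (auto simp: power_mult_distrib)
  qed
  also have "\<dots> \<le> 324 * (X * real g ^ 2) + X * (4 * real g ^ 2)"
    using secondary_error_bound[OF g Q] unfolding X_def N_def by (rule add_right_mono)
  also have "\<dots> = 328 * (X * real g ^ 2)" by simp
  finally show ?thesis unfolding p_def X_def S_def .
qed

theorem proposition4p5:
  fixes q :: nat
  assumes "card (UNIV :: ('a::{finite,field_gcd}) set) = q"
    and "odd q" and "q mod 4 = 1"
  shows "(\<lambda>g::nat.
      (\<Sum>P\<in>{P::'a poly. monic P \<and> irreducible P \<and> degree P = 2*g+1}.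
         \<Sum>f\<in>{f::'a poly. monic f \<and> degree f \<le> 2*g \<and> is_monic_square f}.
           real_of_int (chi P f) * real (divisor_count f) / sqrt (pnorm f))
      - (1/12) * (1 - 1 / real q) * (real q ^ (2*g+1) / real (2*g+1))
          * real g * real (g+1) * real (2*g+1))
    \<in> O(\<lambda>g. real q ^ (2*g+1) / real (2*g+1) * real g ^ 2)"
proof (rule bigoI[where c = 328], rule eventually_mono[OF eventually_ge_at_top[of 1]])
  fix g :: nat assume g: "g \<ge> 1"
  have main: "(1/12) * (1 - 1 / real q) * (real q ^ (2*g+1) / real (2*g+1)) * real g * real (g+1) * real (2*g+1)
              = real q ^ (2*g+1) / real (2*g+1) * main_term (real q) g"
    unfolding main_term_def by (simp only: mult_ac)
  show "norm ((\<Sum>P\<in>{P::'a poly. monic P \<and> irreducible P \<and> degree P = 2*g+1}.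
         \<Sum>f\<in>{f::'a poly. monic f \<and> degree f \<le> 2*g \<and> is_monic_square f}.
           real_of_int (chi P f) * real (divisor_count f) / sqrt (pnorm f))
      - (1/12) * (1 - 1 / real q) * (real q ^ (2*g+1) / real (2*g+1))
          * real g * real (g+1) * real (2*g+1))
    \<le> 328 * norm (real q ^ (2*g+1) / real (2*g+1) * real g ^ 2)"
    using approximation_error[OF g, where 'a='a] assms(1)
    unfolding double_sum_factorises main by simp
qed

end
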